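(* Assume $\delta=d$ and $\gamma\ge1$. Then for every $(z,w)\in A_f$, $$\lim_{n\to\infty}\frac{1}{n\gamma d^{n-1}}\log|Q_z^n(w)|=G_p(z).$$
   Context: Let $p(z)=z^d+O(z^{d-1})$ be a monic polynomial of degree $\delta=d\ge 2$, and let $q(z,w)=b(z)w^d+(\text{terms of lower degree in } w)$ be a polynomial with $\deg_w q=d$, where $b$ is a monic polynomial of degree $\gamma$. Let $f(z,w)=(p(z),q(z,w))$. Write $Q_z^n=q_{p^{n-1}(z)}\circ\cdots\circ q_{p(z)}\circ q_z$ with $q_z=q(z,\cdot)$, so $f^n(z,w)=(p^n(z),Q_z^n(w))$. Let $A_p=\{z: p^n(z)\to\infty\}$ and $G_p(z)=\lim_n d^{-n}\log^+|p^n(z)|$. Define $\alpha=\max\{(n_j-\gamma)/(d-m_j)\}$ over monomials $z^{n_j}w^{m_j}$ appearing in $q$ with nonzero coefficient and $m_j<d$, and $\alpha=-\infty$ if $q=b(z)w^d$. Let $W_R=\{(z,w):|z|>R,\ |w|>R|z|^\alpha\}$ (if $\alpha=-\infty$: $\{|z|>R,\ w\ne0\}$), fix $R>1$ large enough that $f(W_R)\subset W_R$ and $W_R\subset A_p\times\mathbb{C}$, and set $A_f=\bigcup_{n\ge0}f^{-n}(W_R)$. *)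

theory Defs
  imports "HOL-Analysis.Analysis" "HOL-Computational_Algebra.Polynomial"
begin

text \<open>The two-variable polynomial q(z,w) is represented as a polynomial in w whose
coefficients are polynomials in z: q :: complex poly poly, with
q(z,w) = sum_m (coeff q m)(z) w^m.\<close>

definition qeval :: "complex poly poly \<Rightarrow> complex \<Rightarrow> complex \<Rightarrow> complex" where
  "qeval q z w = (\<Sum>m\<le>degree q. poly (coeff q m) z * w ^ m)"

definition skew :: "complex poly \<Rightarrow> complex poly poly \<Rightarrow> complex \<times> complex \<Rightarrow> complex \<times> complex" where
  "skew p q zw = (poly p (fst zw), qeval q (fst zw) (snd zw))"

fun Qit :: "complex poly \<Rightarrow> complex poly poly \<Rightarrow> nat \<Rightarrow> complex \<Rightarrow> complex \<Rightarrow> complex" where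
  "Qit p q 0 z w = w"
| "Qit p q (Suc n) z w = Qit p q n (poly p z) (qeval q z w)"

definition escape_set :: "complex poly \<Rightarrow> complex set" where
  "escape_set p = {z. filterlim (\<lambda>n. norm (((poly p) ^^ n) z)) at_top sequentially}"

definition green :: "complex poly \<Rightarrow> complex \<Rightarrow> real" where
  "green p z = lim (\<lambda>n. max 0 (ln (norm (((poly p) ^^ n) z))) / real (degree p) ^ n)"

definition low_monos :: "complex poly poly \<Rightarrow> (nat \<times> nat) set" where
  "low_monos q = {(n, m). m < degree q \<and> coeff (coeff q m) n \<noteq> 0}"

text \<open>alpha = max (n_j - gamma)/(d - m_j) (only meaningful when low_monos q is nonempty).\<close>
definition alpha :: "complex poly poly \<Rightarrow> real" where
  "alpha q = Max ((\<lambda>(n, m). (real n - real (degree (lead_coeff q))) / (real (degree q) - real m))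
                   ` low_monos q)"

definition W_set :: "complex poly poly \<Rightarrow> real \<Rightarrow> (complex \<times> complex) set" where
  "W_set q R = (if low_monos q = {}
      then {(z, w). R < norm z \<and> w \<noteq> 0}
      else {(z, w). R < norm z \<and> R * norm z powr alpha q < norm w})"

definition A_f :: "complex poly \<Rightarrow> complex poly poly \<Rightarrow> real \<Rightarrow> (complex \<times> complex) set" where
  "A_f p q R = (\<Union>n. ((skew p q) ^^ n) -` W_set q R)"

end

theory Submission
  imports Defs "HOL-Computational_Algebra.Fundamental_Theorem_Algebra"
begin

(* Writing x(n) = ln |Q^n_z(w)|, the orbit eventually stays in W_R, where the fibre map is
   comparable to its leading term b(z) w^d, so x(n+1) = d x(n) + gamma ln |p^n(z)| + O(1).
   Since ln |p^n(z)| = d^n G_p(z) + O(1) for escaping z, x satisfies the growth recursion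
   x(n+1) = d x(n) + gamma G_p(z) d^n + O(1), whose solutions have
   x(n)/d^n = n gamma G_p(z)/d + O(1); dividing by n gamma/d gives the theorem. *)

lemma ln_sandwich:
  fixes X Y c C :: real
  assumes "0 < c" "0 < X" "c * X \<le> Y" "Y \<le> C * X"
  shows "0 < Y" "\<bar>ln Y - ln X\<bar> \<le> max \<bar>ln c\<bar> \<bar>ln C\<bar>"
proof -
  have cX: "0 < c * X" using assms by simp
  then show Y: "0 < Y" using assms(3) by linarith
  have "0 < C * X" using Y assms(4) by linarith
  then have C: "0 < C" using assms(2) by (simp add: zero_less_mult_iff)
  have "ln (c * X) \<le> ln Y" using cX Y assms(3) by simp
  moreover have "ln Y \<le> ln (C * X)" using C Y assms(2,4) by simp
  moreover have "ln (c * X) = ln c + ln X" "ln (C * X) = ln C + ln X"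
    using assms C by (simp_all add: ln_mult)
  ultimately show "\<bar>ln Y - ln X\<bar> \<le> max \<bar>ln c\<bar> \<bar>ln C\<bar>" by linarith
qed

lemma geometric_increments_converge:
  fixes a :: "nat \<Rightarrow> real"
  assumes r: "0 \<le> r" "r < 1" and M: "0 \<le> M" and h: "\<And>n. n \<ge> N \<Longrightarrow> \<bar>a (Suc n) - a n\<bar> \<le> M * r^n"
  shows "\<exists>G. a \<longlonglongrightarrow> G \<and> (\<forall>n\<ge>N. \<bar>a n - G\<bar> \<le> M * r^n / (1 - r))"
proof -
  define \<delta> where "\<delta> i = (if N \<le> i then a (Suc i) - a i else 0)" for i
  have db: "norm (\<delta> i) \<le> M * r^i" for i
    using h[of i] M r by (auto simp: \<delta>_def)
  have sg: "summable (\<lambda>i. M * r^i)"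
    using r by (intro summable_mult summable_geometric) auto
  have sd: "summable \<delta>" by (rule summable_comparison_test[OF _ sg]) (intro exI[of _ 0] allI impI db)
  have rep: "a (N + k) = a N + (\<Sum>i<N + k. \<delta> i)" for k
  proof (induction k)
    case 0
    have "(\<Sum>i<N. \<delta> i) = 0" by (auto simp: \<delta>_def)
    then show ?case by simp
  next
    case (Suc k)
    then show ?case by (simp add: \<delta>_def)
  qed
  have rep': "a n = a N + (\<Sum>i<n. \<delta> i)" if "n \<ge> N" for n
    using rep[of "n - N"] that by simp
  define G where "G = a N + suminf \<delta>"
  have "(\<lambda>n. a N + (\<Sum>i<n. \<delta> i)) \<longlonglongrightarrow> G"
    unfolding G_def by (intro tendsto_add tendsto_const summable_LIMSEQ sd)
  then have conv: "a \<longlonglongrightarrow> G"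
  proof (rule Lim_transform_eventually)
    show "\<forall>\<^sub>F n in sequentially. a N + (\<Sum>i<n. \<delta> i) = a n"
      unfolding eventually_sequentially by (intro exI[of _ N] allI impI) (rule rep'[symmetric])
  qed
  have tail: "\<bar>a n - G\<bar> \<le> M * r^n / (1 - r)" if "n \<ge> N" for n
  proof -
    have "G - a n = suminf \<delta> - (\<Sum>i<n. \<delta> i)" using rep'[OF that] by (simp add: G_def)
    also have "\<dots> = (\<Sum>i. \<delta> (i + n))" using suminf_split_initial_segment[OF sd, of n] by simp
    finally have e: "G - a n = (\<Sum>i. \<delta> (i + n))" .
    have sg2: "summable (\<lambda>i. M * r^n * r^i)"
      using r by (intro summable_mult summable_geometric) auto
    have "norm (\<Sum>i. \<delta> (i + n)) \<le> (\<Sum>i. M * r^n * r^i)"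
    proof (rule norm_suminf_le[OF _ sg2])
      fix i show "norm (\<delta> (i + n)) \<le> M * r^n * r^i"
        using db[of "i+n"] by (simp add: power_add mult_ac)
    qed
    also have "(\<Sum>i. M * r^n * r^i) = M * r^n * (1 / (1 - r))"
      using r by (subst suminf_mult) (auto simp: suminf_geometric)
    finally show ?thesis using e by (simp add: abs_minus_commute)
  qed
  show ?thesis using conv tail by blast
qed

lemma growth_recursion:
  fixes x :: "nat \<Rightarrow> real" and d c K :: real
  assumes d: "1 < d" and K: "0 \<le> K"
    and rec: "\<And>n. N \<le> n \<Longrightarrow> \<bar>x (Suc n) - d * x n - c * d ^ n\<bar> \<le> K"
  shows "\<exists>G. (\<lambda>n. x n / d ^ n - real n * c / d) \<longlonglongrightarrow> G \<and>
           (\<forall>n\<ge>N. \<bar>x n - d ^ n * (G + real n * c / d)\<bar> \<le> K / (d - 1))"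
proof -
  define a where "a n = x n / d ^ n - real n * c / d" for n
  have dn: "0 < d ^ n" for n using d by simp
  have inc: "\<bar>a (Suc n) - a n\<bar> \<le> (K / d) * (1 / d) ^ n" if "N \<le> n" for n
  proof -
    have "a (Suc n) - a n = (x (Suc n) - d * x n - c * d ^ n) / d ^ Suc n"
      using d by (simp add: a_def field_simps)
    then have "\<bar>a (Suc n) - a n\<bar> \<le> K / d ^ Suc n"
      using rec[OF that] dn[of "Suc n"] by (simp add: divide_right_mono)
    also have "\<dots> = (K / d) * (1 / d) ^ n" by (simp add: power_divide)
    finally show ?thesis .
  qed
  obtain G where aG: "a \<longlonglongrightarrow> G"
    and tail: "\<And>n. N \<le> n \<Longrightarrow> \<bar>a n - G\<bar> \<le> (K / d) * (1 / d) ^ n / (1 - 1 / d)"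
    using geometric_increments_converge[of "1 / d" "K / d" N a] d K inc by auto
  have "\<bar>x n - d ^ n * (G + real n * c / d)\<bar> \<le> K / (d - 1)" if "N \<le> n" for n
  proof -
    have "x n - d ^ n * (G + real n * c / d) = d ^ n * (a n - G)"
      using d by (simp add: a_def field_simps)
    then have "\<bar>x n - d ^ n * (G + real n * c / d)\<bar> = d ^ n * \<bar>a n - G\<bar>"
      using dn[of n] by (simp add: abs_mult)
    also have "\<dots> \<le> d ^ n * ((K / d) * (1 / d) ^ n / (1 - 1 / d))"
      using tail[OF that] dn[of n] by (intro mult_left_mono) auto
    also have "\<dots> = K / (d - 1)"
      using d by (simp add: power_divide field_simps)
    finally show ?thesis .
  qed
  then show ?thesis using aG unfolding a_def by blast
qed

lemma normalised_growth_limit: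
  fixes x :: "nat \<Rightarrow> real" and d g G E :: real
  assumes lim: "(\<lambda>n. x n / d ^ n - real n * (g * G) / d) \<longlonglongrightarrow> E" and "0 < d" "0 < g"
  shows "(\<lambda>n. x n / (real n * g * d ^ (n - 1))) \<longlonglongrightarrow> G"
proof -
  define y where "y n = d / g * (x n / d ^ n - real n * (g * G) / d) * inverse (real n) + G" for n
  have "y \<longlonglongrightarrow> d / g * E * 0 + G"
    unfolding y_def by (intro tendsto_intros lim lim_inverse_n)
  then have "y \<longlonglongrightarrow> G" by simp
  moreover have "y n = x n / (real n * g * d ^ (n - 1))" if n: "1 \<le> n" for n
  proof -
    obtain m where m: "n = Suc m" using n by (cases n) auto
    have "d / g * (x n / d ^ n - real n * (g * G) / d) = x n / (g * d ^ (n - 1)) - real n * G"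
      using assms(2,3) by (simp add: m field_simps)
    moreover have "(X - real n * G) * inverse (real n) + G = X / real n" for X
      using n by (simp add: field_simps)
    ultimately show ?thesis by (simp add: y_def mult_ac)
  qed
  then have "\<forall>\<^sub>F n in sequentially. y n = x n / (real n * g * d ^ (n - 1))"
    unfolding eventually_sequentially by blast
  ultimately show ?thesis by (rule Lim_transform_eventually)
qed

lemma monic_poly_comparable:
  fixes b :: "complex poly"
  assumes "lead_coeff b = 1"
  shows "\<exists>R0\<ge>1. \<forall>x. R0 \<le> norm x \<longrightarrow>
           norm x ^ degree b / 2 \<le> norm (poly b x) \<and> norm (poly b x) \<le> 2 * norm x ^ degree b"
proof -
  define g where "g = degree b"
  define S where "S = (\<Sum>i<g. norm (coeff b i))"
  have "norm x ^ g / 2 \<le> norm (poly b x) \<and> norm (poly b x) \<le> 2 * norm x ^ g"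
    if x: "max 1 (2 * S) \<le> norm x" for x
  proof -
    have x1: "1 \<le> norm x" using x by simp
    have "poly b x = (\<Sum>i<g. coeff b i * x ^ i) + x ^ g"
      using assms by (simp add: poly_altdef g_def flip: lessThan_Suc_atMost)
    then have e: "poly b x - x ^ g = (\<Sum>i<g. coeff b i * x ^ i)" by simp
    have "norm (\<Sum>i<g. coeff b i * x ^ i) \<le> (\<Sum>i<g. norm (coeff b i) * (norm x ^ g / norm x))"
    proof (rule sum_norm_le)
      fix i assume "i \<in> {..<g}"
      then have "norm x ^ Suc i \<le> norm x ^ g" using x1 by (intro power_increasing) auto
      then have "norm x ^ i \<le> norm x ^ g / norm x" using x1 by (subst pos_le_divide_eq) (auto simp: mult.commute)
      then show "norm (coeff b i * x ^ i) \<le> norm (coeff b i) * (norm x ^ g / norm x)"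
        unfolding norm_mult norm_power by (rule mult_left_mono) simp_all
    qed
    also have "\<dots> = S * (norm x ^ g / norm x)" by (simp add: S_def sum_distrib_right sum_divide_distrib)
    also have "\<dots> \<le> (norm x / 2) * (norm x ^ g / norm x)"
      using x by (intro mult_right_mono) auto
    also have "\<dots> = norm x ^ g / 2" using x1 by (cases "x = 0") simp_all
    finally have "norm (poly b x - x ^ g) \<le> norm x ^ g / 2" unfolding e .
    then show ?thesis
      using norm_triangle_ineq2[of "x ^ g" "poly b x"] norm_triangle_ineq[of "poly b x - x ^ g" "x ^ g"]
      by (simp add: norm_power norm_minus_commute)
  qed
  then show ?thesis unfolding g_def by (intro exI[of _ "max 1 (2 * S)"]) auto
qed

lemma monic_poly_log_estimate:
  fixes b :: "complex poly"
  assumes "lead_coeff b = 1"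
  shows "\<exists>R0\<ge>1. \<forall>x. R0 \<le> norm x \<longrightarrow>
           \<bar>ln (norm (poly b x)) - real (degree b) * ln (norm x)\<bar> \<le> ln 2"
proof -
  obtain R0 where R0: "R0 \<ge> 1" and cmp: "\<And>x. R0 \<le> norm x \<Longrightarrow>
      (1 / 2) * norm x ^ degree b \<le> norm (poly b x) \<and> norm (poly b x) \<le> 2 * norm x ^ degree b"
    using monic_poly_comparable[OF assms] by auto
  have "\<bar>ln (norm (poly b x)) - real (degree b) * ln (norm x)\<bar> \<le> ln 2" if "R0 \<le> norm x" for x
  proof -
    have x: "0 < norm x" using that R0 by linarith
    have "\<bar>ln (norm (poly b x)) - ln (norm x ^ degree b)\<bar> \<le> max \<bar>ln (1 / 2)\<bar> \<bar>ln 2\<bar>"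
      by (rule ln_sandwich(2)[of "1 / 2" "norm x ^ degree b"]) (use cmp[OF that] x in simp_all)
    moreover have "ln (1 / 2 :: real) = - ln 2"
      using ln_div[of 1 2] by simp
    moreover have "0 \<le> ln (2 :: real)" by simp
    moreover have "ln (norm x ^ degree b) = real (degree b) * ln (norm x)"
      using x by (simp add: ln_realpow)
    ultimately show ?thesis by (simp add: max_def)
  qed
  then show ?thesis using R0 by blast
qed

lemma coeff_pCons_one_mult: "coeff ([:1, c:] * (Q::complex poly)) j = coeff Q j + (if j = 0 then 0 else c * coeff Q (j - 1))"
  by (cases j) (simp_all add: mult_pCons_left coeff_pCons)

lemma coeff_normalised_prod_bound:
  fixes M :: "complex multiset"
  assumes "\<forall>r\<in>#M. \<rho> \<le> norm r" "\<rho> > 0"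
  shows "norm (coeff (\<Prod>r\<in>#M. [:1, -1/r:]) j) \<le> real (size M choose j) / \<rho>^j"
  using assms(1)
proof (induction M arbitrary: j)
  case empty
  then show ?case by (cases j) auto
next
  case (add r M)
  have r: "\<rho> \<le> norm r" using add.prems by auto
  have IH: "\<And>j. norm (coeff (\<Prod>r\<in>#M. [:1, -1/r:]) j) \<le> real (size M choose j) / \<rho>^j"
    using add by auto
  let ?Q = "\<Prod>r\<in>#M. [:1, -1/r:]"
  show ?case
  proof (cases j)
    case 0
    then show ?thesis using IH[of 0] by (simp add: coeff_pCons_one_mult)
  next
    case (Suc i)
    have "norm (coeff (\<Prod>r\<in>#add_mset r M. [:1, -1/r:]) j) = norm (coeff ?Q j + (-1/r) * coeff ?Q i)"
      using Suc by (simp add: coeff_pCons_one_mult)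
    also have "\<dots> \<le> norm (coeff ?Q j) + norm ((-1/r) * coeff ?Q i)"
      by (rule norm_triangle_ineq)
    also have "norm ((-1/r) * coeff ?Q i) = norm (1/r) * norm (coeff ?Q i)"
      by (simp add: norm_mult norm_divide)
    also have "norm (1/r) * norm (coeff ?Q i) \<le> (1/\<rho>) * (real (size M choose i) / \<rho>^i)"
    proof (rule mult_mono)
      show "norm (1/r) \<le> 1/\<rho>" using r assms(2) by (simp add: norm_divide frac_le)
    qed (use IH[of i] assms(2) in auto)
    also have "(1/\<rho>) * (real (size M choose i) / \<rho>^i) = real (size M choose i) / \<rho>^j"
      using Suc by simp
    finally have "norm (coeff (\<Prod>r\<in>#add_mset r M. [:1, -1/r:]) j) \<le>
       real (size M choose j) / \<rho>^j + real (size M choose i) / \<rho>^j"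
      using IH[of j] by linarith
    also have "\<dots> = real (size (add_mset r M) choose j) / \<rho>^j"
      using Suc by (simp add: add_divide_distrib)
    finally show ?thesis .
  qed
qed

lemma coeff0_normalised_prod: "coeff (\<Prod>x\<in>#(M::complex multiset). [:1, -1/x:]) 0 = 1"
  by (induction M) (auto simp: coeff_pCons_one_mult)

lemma prod_linear_factors_normalised:
  fixes M :: "complex multiset"
  assumes "\<forall>r\<in>#M. r \<noteq> 0"
  shows "(\<Prod>y\<in>#M. [:-y, 1:]) = smult (\<Prod>y\<in>#M. -y) (\<Prod>y\<in>#M. [:1, -1/y:])"
  using assms
proof (induction M)
  case (add a M)
  have e: "[:-a, 1:] = smult (-a) [:1, -1/a:]" using add.prems by (simp add: field_simps)
  have "(\<Prod>y\<in>#add_mset a M. [:-y, 1:]) = [:-a, 1:] * (\<Prod>y\<in>#M. [:-y, 1:])" by simp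
  also have "\<dots> = smult (-a) [:1, -1/a:] * smult (\<Prod>y\<in>#M. -y) (\<Prod>y\<in>#M. [:1, -1/y:])"
    using add e by simp
  also have "\<dots> = smult ((-a) * (\<Prod>y\<in>#M. -y)) ([:1, -1/a:] * (\<Prod>y\<in>#M. [:1, -1/y:]))"
    by (simp only: mult_smult_left mult_smult_right smult_smult mult.commute[of "\<Prod>y\<in>#M. -y"])
  also have "\<dots> = smult (\<Prod>y\<in>#add_mset a M. -y) (\<Prod>y\<in>#add_mset a M. [:1, -1/y:])"
    by (simp only: prod_mset.add_mset image_mset_add_mset)
  finally show ?case .
qed simp

lemma zero_free_coeff_bound:
  fixes P :: "complex poly"
  assumes "\<rho> > 0" "\<And>t. norm t < \<rho> \<Longrightarrow> poly P t \<noteq> 0"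
  shows "norm (coeff P j) \<le> 2 ^ degree P * norm (coeff P 0) / \<rho>^j"
proof -
  have P0: "P \<noteq> 0" using assms(2)[of 0] assms(1) by auto
  let ?M = "proots P"
  have rts: "\<forall>r\<in>#?M. \<rho> \<le> norm r"
    using assms P0 by (auto simp: not_less[symmetric])
  have nz: "\<forall>r\<in>#?M. r \<noteq> 0" using rts assms(1) by auto
  have "(\<Prod>x\<in>#?M. [:-x, 1:]) = smult (\<Prod>x\<in>#?M. -x) (\<Prod>x\<in>#?M. [:1, -1/x:])"
    using nz by (rule prod_linear_factors_normalised)
  then have "P = smult (lead_coeff P * (\<Prod>x\<in>#?M. -x)) (\<Prod>x\<in>#?M. [:1, -1/x:])"
    using complex_poly_decompose_multiset[of P] by simp
  then obtain \<kappa> Q where PQ: "P = smult \<kappa> Q" and Q: "Q = (\<Prod>x\<in>#?M. [:1, -1/x:])" by blast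
  have Q0: "coeff Q 0 = 1" unfolding Q by (rule coeff0_normalised_prod)
  have "norm (coeff Q j) \<le> real (size ?M choose j) / \<rho>^j"
    unfolding Q by (rule coeff_normalised_prod_bound[OF rts assms(1)])
  also have "\<dots> \<le> 2 ^ degree P / \<rho>^j"
    using binomial_le_pow2[of "size ?M" j] assms(1)
    by (intro divide_right_mono) (auto simp: size_proots_complex simp flip: of_nat_le_iff)
  finally have "norm \<kappa> * norm (coeff Q j) \<le> norm \<kappa> * (2 ^ degree P / \<rho>^j)"
    by (intro mult_left_mono) auto
  then show ?thesis using PQ Q0 by (auto simp: norm_mult mult_ac)
qed

(* A continuous inequality valid on {R < |w|} outside a finite set extends to {R <= |w|},
   since every point of the latter is a limit point of the former minus that finite set. *)
lemma le_on_closure_of_exterior: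
  fixes f g :: "complex \<Rightarrow> real"
  assumes f: "continuous_on UNIV f" and g: "continuous_on UNIV g" and Z: "finite Z"
    and le: "\<And>\<omega>. R < norm \<omega> \<Longrightarrow> \<omega> \<notin> Z \<Longrightarrow> f \<omega> \<le> g \<omega>"
    and \<omega>0: "R \<le> norm \<omega>0"
  shows "f \<omega>0 \<le> g \<omega>0"
proof -
  define S where "S = - cball (0::complex) R"
  have "\<omega>0 \<in> closure S" using \<omega>0 by (simp add: S_def closure_complement)
  moreover have "\<omega>0 islimpt S" if "\<omega>0 \<in> S"
    using that by (intro interior_limit_point) (simp add: S_def interior_open open_Compl)
  ultimately have "\<omega>0 islimpt S" by (auto simp: closure_def)
  then have "\<omega>0 islimpt (Z \<union> (S - Z))" by (rule islimpt_subset) auto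
  then have "\<omega>0 islimpt (S - Z)" using islimpt_Un_finite[OF Z] by blast
  moreover have "S - Z \<subseteq> {\<omega>. f \<omega> \<le> g \<omega>}" using le by (auto simp: S_def)
  ultimately have "\<omega>0 islimpt {\<omega>. f \<omega> \<le> g \<omega>}" by (rule islimpt_subset)
  moreover have "closed {\<omega>. f \<omega> \<le> g \<omega>}" using f g by (rule closed_Collect_le)
  ultimately show ?thesis using closed_limpt by blast
qed

(* A monic polynomial without zeros in {R <= |w|} is bounded below there by m |w|^deg:
   compactness on an annulus, comparison with the leading term outside it. *)
lemma monic_zero_free_lower_bound:
  fixes P :: "complex poly"
  assumes P: "lead_coeff P = 1" and R: "0 < R" and nz: "\<And>\<omega>. R \<le> norm \<omega> \<Longrightarrow> poly P \<omega> \<noteq> 0"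
  shows "\<exists>m>0. \<forall>\<omega>. R \<le> norm \<omega> \<longrightarrow> m * norm \<omega> ^ degree P \<le> norm (poly P \<omega>)"
proof -
  obtain R0 where big: "\<And>x. R0 \<le> norm x \<Longrightarrow> norm x ^ degree P / 2 \<le> norm (poly P x)"
    using monic_poly_comparable[OF P] by blast
  define Ann where "Ann = cball (0::complex) (max R R0) - ball 0 R"
  define h where "h \<omega> = norm (poly P \<omega>) / norm \<omega> ^ degree P" for \<omega>
  have "compact Ann" unfolding Ann_def by (intro compact_diff compact_cball open_ball)
  moreover have "complex_of_real R \<in> Ann" using R by (auto simp: Ann_def)
  moreover have "continuous_on Ann h"
    unfolding h_def using R by (intro continuous_intros) (auto simp: Ann_def)
  ultimately obtain \<omega>m where \<omega>m: "\<omega>m \<in> Ann" "\<And>\<omega>. \<omega> \<in> Ann \<Longrightarrow> h \<omega>m \<le> h \<omega>"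
    by (metis continuous_attains_inf empty_iff)
  have "R \<le> norm \<omega>m" using \<omega>m(1) by (auto simp: Ann_def)
  moreover from this have "0 < norm \<omega>m" using R by linarith
  ultimately have hpos: "0 < h \<omega>m" using nz unfolding h_def by (intro divide_pos_pos) auto
  define m where "m = min (1 / 2) (h \<omega>m)"
  have "m * norm \<omega> ^ degree P \<le> norm (poly P \<omega>)" if \<omega>: "R \<le> norm \<omega>" for \<omega>
  proof (cases "norm \<omega> \<le> max R R0")
    case True
    then have "\<omega> \<in> Ann" using \<omega> by (auto simp: Ann_def)
    then have "m \<le> h \<omega>" using \<omega>m(2)[of \<omega>] by (simp add: m_def)
    moreover have "0 < norm \<omega> ^ degree P" using \<omega> R by (intro zero_less_power) linarith
    ultimately show ?thesis by (simp add: h_def pos_le_divide_eq)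
  next
    case False
    then have "norm \<omega> ^ degree P / 2 \<le> norm (poly P \<omega>)" using big by simp
    moreover have "m * norm \<omega> ^ degree P \<le> 1 / 2 * norm \<omega> ^ degree P"
      by (intro mult_right_mono) (auto simp: m_def)
    ultimately show ?thesis by simp
  qed
  then show ?thesis using hpos by (intro exI[of _ m]) (auto simp: m_def)
qed

(* Coefficients cf m n (of w^m z^n) and exponent patterns k n m of a two-variable polynomial. *)
type_synonym coeff_table = "nat \<Rightarrow> nat \<Rightarrow> complex"
type_synonym exponent_pattern = "nat \<Rightarrow> nat \<Rightarrow> nat"

(* The rescaled polynomial F(w, t) = sum cf m n * w^m * t^(k n m) in two variables.
   Substituting z = zeta^B, w = omega * zeta^A turns q(z, w) into z^gamma zeta^(A d) F(omega, 1/zeta). *)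
definition rescaled ::
    "coeff_table \<Rightarrow> exponent_pattern \<Rightarrow> nat \<Rightarrow> nat \<Rightarrow> complex \<Rightarrow> complex \<Rightarrow> complex" where
  "rescaled cf k d D \<omega> t = (\<Sum>m\<le>d. \<Sum>n\<le>D. cf m n * \<omega>^m * t^(k n m))"

definition coeff_mass :: "coeff_table \<Rightarrow> nat \<Rightarrow> nat \<Rightarrow> real" where
  "coeff_mass cf d D = (\<Sum>m\<le>d. \<Sum>n\<le>D. norm (cf m n))"

lemma coeff_mass_nonneg: "coeff_mass cf d D \<ge> 0"
  unfolding coeff_mass_def by (intro sum_nonneg) auto

lemma norm_power_diff_le: "norm (t::complex) \<le> 1 \<Longrightarrow> norm (t^k - 0^k) \<le> norm t"
  by (cases k) (auto simp: norm_mult norm_power intro!: mult_left_le power_le_one)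

lemma rescaled_diff_bound:
  assumes "norm t \<le> 1" "norm \<omega> \<ge> 1"
  shows "norm (rescaled cf k d D \<omega> t - rescaled cf k d D \<omega> 0) \<le> norm t * coeff_mass cf d D * norm \<omega> ^ d"
proof -
  have "rescaled cf k d D \<omega> t - rescaled cf k d D \<omega> 0 = (\<Sum>m\<le>d. \<Sum>n\<le>D. cf m n * \<omega>^m * (t^(k n m) - 0^(k n m)))"
    unfolding rescaled_def by (simp add: sum_subtractf algebra_simps)
  also have "norm \<dots> \<le> (\<Sum>m\<le>d. \<Sum>n\<le>D. norm (cf m n) * (norm t * norm \<omega> ^ d))"
  proof (intro sum_norm_le)
    fix m n assume m: "m \<in> {..d}" and n: "n \<in> {..D}"
    have "norm \<omega> ^ m \<le> norm \<omega> ^ d" using m assms(2) by (intro power_increasing) auto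
    moreover have "norm (t^(k n m) - 0^(k n m)) \<le> norm t" by (rule norm_power_diff_le[OF assms(1)])
    ultimately have "norm \<omega> ^ m * norm (t^(k n m) - 0^(k n m)) \<le> norm \<omega> ^ d * norm t"
      by (intro mult_mono) auto
    then have "norm (cf m n) * (norm \<omega> ^ m * norm (t^(k n m) - 0^(k n m))) \<le> norm (cf m n) * (norm \<omega> ^ d * norm t)"
      by (rule mult_left_mono) simp
    then show "norm (cf m n * \<omega>^m * (t^(k n m) - 0^(k n m))) \<le> norm (cf m n) * (norm t * norm \<omega> ^ d)"
      by (simp add: norm_mult norm_power mult_ac)
  qed
  also have "\<dots> = norm t * coeff_mass cf d D * norm \<omega> ^ d"
    unfolding coeff_mass_def by (simp add: sum_distrib_right sum_distrib_left mult_ac)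
  finally show ?thesis .
qed

lemma rescaled_upper_bound:
  assumes "norm t \<le> 1" "norm \<omega> \<ge> 1"
  shows "norm (rescaled cf k d D \<omega> t) \<le> coeff_mass cf d D * norm \<omega> ^ d"
proof -
  have "norm (rescaled cf k d D \<omega> t) \<le> (\<Sum>m\<le>d. \<Sum>n\<le>D. norm (cf m n) * norm \<omega> ^ d)"
    unfolding rescaled_def
  proof (intro sum_norm_le)
    fix m n assume m: "m \<in> {..d}" and n: "n \<in> {..D}"
    have "norm \<omega> ^ m \<le> norm \<omega> ^ d" using m assms(2) by (intro power_increasing) auto
    moreover have "norm t ^ (k n m) \<le> 1" using assms(1) by (intro power_le_one) auto
    ultimately have "norm \<omega> ^ m * norm t ^ (k n m) \<le> norm \<omega> ^ d * 1"
      by (intro mult_mono) auto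
    then have "norm (cf m n) * (norm \<omega> ^ m * norm t ^ (k n m)) \<le> norm (cf m n) * (norm \<omega> ^ d * 1)"
      by (rule mult_left_mono) simp
    then show "norm (cf m n * \<omega>^m * t^(k n m)) \<le> norm (cf m n) * norm \<omega> ^ d"
      by (simp add: norm_mult norm_power mult_ac)
  qed
  also have "\<dots> = coeff_mass cf d D * norm \<omega> ^ d"
    unfolding coeff_mass_def by (simp add: sum_distrib_right)
  finally show ?thesis .
qed

definition rescaled_tpoly ::
    "coeff_table \<Rightarrow> exponent_pattern \<Rightarrow> nat \<Rightarrow> nat \<Rightarrow> complex \<Rightarrow> complex poly" where
  "rescaled_tpoly cf k d D \<omega> = (\<Sum>m\<le>d. \<Sum>n\<le>D. monom (cf m n * \<omega>^m) (k n m))"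

lemma poly_rescaled_tpoly: "poly (rescaled_tpoly cf k d D \<omega>) t = rescaled cf k d D \<omega> t"
  unfolding rescaled_tpoly_def rescaled_def by (simp add: poly_sum poly_monom)

lemma coeff_rescaled_tpoly: "coeff (rescaled_tpoly cf k d D \<omega>) j = (\<Sum>m\<le>d. \<Sum>n\<le>D. cf m n * \<omega>^m * (if k n m = j then 1 else 0))"
  unfolding rescaled_tpoly_def by (auto simp: coeff_sum intro!: sum.cong)

lemma degree_rescaled_tpoly: "degree (rescaled_tpoly cf k d D \<omega>) \<le> (\<Sum>m\<le>d. \<Sum>n\<le>D. k n m)"
proof (rule degree_le, intro allI impI)
  fix j assume j: "(\<Sum>m\<le>d. \<Sum>n\<le>D. k n m) < j"
  have "k n m \<noteq> j" if "m \<le> d" "n \<le> D" for m n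
  proof -
    have "k n m \<le> (\<Sum>n\<le>D. k n m)" using that by (intro member_le_sum) auto
    also have "\<dots> \<le> (\<Sum>m\<le>d. \<Sum>n\<le>D. k n m)"
      using that by (intro member_le_sum[of m "{..d}" "\<lambda>m. \<Sum>n\<le>D. k n m"]) auto
    finally show ?thesis using j by auto
  qed
  then show "coeff (rescaled_tpoly cf k d D \<omega>) j = 0" unfolding coeff_rescaled_tpoly by (auto intro!: sum.neutral)
qed

definition rescaled_leading_poly ::
    "coeff_table \<Rightarrow> exponent_pattern \<Rightarrow> nat \<Rightarrow> nat \<Rightarrow> complex poly" where
  "rescaled_leading_poly cf k d D = (\<Sum>m\<le>d. \<Sum>n\<le>D. monom (cf m n * 0^(k n m)) m)"

lemma poly_rescaled_leading_poly: "poly (rescaled_leading_poly cf k d D) \<omega> = rescaled cf k d D \<omega> 0"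
  unfolding rescaled_leading_poly_def rescaled_def by (simp add: poly_sum poly_monom mult_ac)

(* The exponent pattern makes F(w, 0) a monic polynomial of degree d in w: the monomial
   w^d t^0 comes from the leading coefficient b of q and has coefficient 1, all other
   monomials w^d t^k have k > 0. *)
definition monic_at_zero ::
    "coeff_table \<Rightarrow> exponent_pattern \<Rightarrow> nat \<Rightarrow> nat \<Rightarrow> nat \<Rightarrow> bool" where
  "monic_at_zero cf k d D \<gamma> \<longleftrightarrow>
     \<gamma> \<le> D \<and> cf d \<gamma> = 1 \<and> k \<gamma> d = 0 \<and> (\<forall>n\<le>D. n \<noteq> \<gamma> \<longrightarrow> cf d n = 0 \<or> 0 < k n d)"

lemma leading_poly_monic:
  assumes "monic_at_zero cf k d D \<gamma>"
  shows "degree (rescaled_leading_poly cf k d D) = d" "lead_coeff (rescaled_leading_poly cf k d D) = 1"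
proof -
  let ?P = "rescaled_leading_poly cf k d D"
  have c: "coeff ?P j = (if j \<le> d then \<Sum>n\<le>D. cf j n * 0 ^ k n j else 0)" for j
  proof -
    have "coeff ?P j = (\<Sum>m\<le>d. \<Sum>n\<le>D. if m = j then cf m n * 0 ^ k n m else 0)"
      by (simp add: rescaled_leading_poly_def coeff_sum coeff_monom)
    also have "\<dots> = (\<Sum>m\<le>d. if m = j then \<Sum>n\<le>D. cf m n * 0 ^ k n m else 0)"
      by (intro sum.cong refl) simp
    finally show ?thesis by (simp add: sum.delta')
  qed
  have "(\<Sum>n\<le>D. cf d n * 0 ^ k n d) = (\<Sum>n\<le>D. if n = \<gamma> then 1 else 0)"
    using assms by (intro sum.cong) (auto simp: monic_at_zero_def)
  also have "\<dots> = 1" using assms by (simp add: monic_at_zero_def)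
  finally have cd: "coeff ?P d = 1" by (simp add: c)
  have "degree ?P \<le> d" by (rule degree_le) (simp add: c)
  moreover have "d \<le> degree ?P" using cd by (intro le_degree) simp
  ultimately show deg: "degree ?P = d" by simp
  show "lead_coeff ?P = 1" using cd by (simp add: deg)
qed

lemma rescaled_lower_bound:
  assumes mz: "monic_at_zero cf k d D \<gamma>" and R: "1 \<le> R"
    and nz: "\<And>\<omega>. R \<le> norm \<omega> \<Longrightarrow> rescaled cf k d D \<omega> 0 \<noteq> 0"
  shows "\<exists>c T. 0 < c \<and> 0 < T \<and> T \<le> 1 \<and>
           (\<forall>\<omega> t. R \<le> norm \<omega> \<longrightarrow> norm t \<le> T \<longrightarrow> c * norm \<omega> ^ d \<le> norm (rescaled cf k d D \<omega> t))"
proof -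
  let ?F = "rescaled cf k d D"
  obtain m where m: "0 < m" and mb: "\<And>\<omega>. R \<le> norm \<omega> \<Longrightarrow> m * norm \<omega> ^ d \<le> norm (?F \<omega> 0)"
    using monic_zero_free_lower_bound[of "rescaled_leading_poly cf k d D" R] leading_poly_monic[OF mz] nz R
    by (auto simp: poly_rescaled_leading_poly)
  define S where "S = coeff_mass cf d D"
  have S: "0 \<le> S" unfolding S_def by (rule coeff_mass_nonneg)
  define T where "T = min 1 (m / (2 * (S + 1)))"
  have T: "0 < T" "T \<le> 1" using m S by (auto simp: T_def)
  have "T * S \<le> m / (2 * (S + 1)) * S" using S by (intro mult_right_mono) (auto simp: T_def)
  also have "\<dots> \<le> m / 2" using m S by (simp add: field_simps)
  finally have TS: "T * S \<le> m / 2" .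
  have "m / 2 * norm \<omega> ^ d \<le> norm (?F \<omega> t)" if \<omega>: "R \<le> norm \<omega>" and t: "norm t \<le> T" for \<omega> t
  proof -
    have "norm (?F \<omega> t - ?F \<omega> 0) \<le> norm t * S * norm \<omega> ^ d"
      unfolding S_def using t T \<omega> R by (intro rescaled_diff_bound) auto
    also have "\<dots> \<le> T * S * norm \<omega> ^ d" using t S by (intro mult_right_mono) auto
    also have "\<dots> \<le> m / 2 * norm \<omega> ^ d" using TS by (intro mult_right_mono) auto
    finally show ?thesis
      using mb[OF \<omega>] norm_triangle_ineq2[of "?F \<omega> 0" "?F \<omega> t"] norm_minus_commute[of "?F \<omega> 0" "?F \<omega> t"]
      by linarith
  qed
  then show ?thesis using m T by (intro exI[of _ "m / 2"] exI[of _ T]) auto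
qed

lemma tpoly_coeff_bound:
  assumes \<rho>: "0 < \<rho>" and nz: "\<And>t. norm t < \<rho> \<Longrightarrow> rescaled cf k d D \<omega> t \<noteq> 0"
  shows "norm (coeff (rescaled_tpoly cf k d D \<omega>) j)
           \<le> 2 ^ (\<Sum>m\<le>d. \<Sum>n\<le>D. k n m) / \<rho> ^ j * norm (rescaled cf k d D \<omega> 0)"
proof -
  let ?P = "rescaled_tpoly cf k d D \<omega>"
  have "norm (coeff ?P j) \<le> 2 ^ degree ?P * norm (coeff ?P 0) / \<rho> ^ j"
    using nz by (intro zero_free_coeff_bound[OF \<rho>]) (simp add: poly_rescaled_tpoly)
  also have "coeff ?P 0 = rescaled cf k d D \<omega> 0"
    by (simp add: poly_0_coeff_0[symmetric] poly_rescaled_tpoly)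
  also have "2 ^ degree ?P * norm (rescaled cf k d D \<omega> 0) / \<rho> ^ j
      \<le> 2 ^ (\<Sum>m\<le>d. \<Sum>n\<le>D. k n m) * norm (rescaled cf k d D \<omega> 0) / \<rho> ^ j"
    using \<rho> degree_rescaled_tpoly by (intro divide_right_mono mult_right_mono power_increasing) auto
  finally show ?thesis by simp
qed

(* Otherwise F(w0, .) is a nonzero polynomial (by continuity it does not vanish
   at small t =/= 0), while the coefficient bound for the zero-free F(w, .) with |w| > R passes
   to the limit w -> w0 and bounds every coefficient of F(w0, .) by a multiple of F(w0, 0) = 0. *)
lemma rescaled_nonvanishing_at_zero:
  assumes \<rho>: "0 < \<rho>" and mz: "monic_at_zero cf k d D \<gamma>"
    and H: "\<And>t. 0 < norm t \<Longrightarrow> norm t < \<rho> \<Longrightarrow> \<exists>e>0. \<forall>\<omega>. R < norm \<omega> \<longrightarrow> e \<le> norm (rescaled cf k d D \<omega> t)"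
    and \<omega>0: "R \<le> norm \<omega>0"
  shows "rescaled cf k d D \<omega>0 0 \<noteq> 0"
proof
  assume F0: "rescaled cf k d D \<omega>0 0 = 0"
  let ?F = "rescaled cf k d D" and ?P = "rescaled_tpoly cf k d D"
  have cont: "continuous_on UNIV (\<lambda>\<omega>. ?F \<omega> t)" for t
    unfolding rescaled_def by (intro continuous_intros)
  have punct: "?F \<omega>0 t \<noteq> 0" if t: "0 < norm t" "norm t < \<rho>" for t
  proof -
    obtain e where e: "0 < e" "\<And>\<omega>. R < norm \<omega> \<Longrightarrow> e \<le> norm (?F \<omega> t)" using H[OF t] by blast
    have "e \<le> norm (?F \<omega>0 t)"
      using le_on_closure_of_exterior[OF continuous_on_const continuous_on_norm[OF cont] finite.emptyI _ \<omega>0] e(2) by blast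
    then show ?thesis using e(1) by auto
  qed
  have "poly (?P \<omega>0) (of_real (\<rho> / 2)) \<noteq> 0"
    using punct[of "of_real (\<rho> / 2)"] \<rho> by (simp add: poly_rescaled_tpoly)
  then have "?P \<omega>0 \<noteq> 0" by auto
  then obtain j0 where j0: "coeff (?P \<omega>0) j0 \<noteq> 0" using leading_coeff_neq_0 by blast
  define M where "M = 2 ^ (\<Sum>m\<le>d. \<Sum>n\<le>D. k n m) / \<rho> ^ j0"
  define Z where "Z = {\<omega>. poly (rescaled_leading_poly cf k d D) \<omega> = 0}"
  have "rescaled_leading_poly cf k d D \<noteq> 0" using leading_poly_monic(2)[OF mz] by auto
  then have finZ: "finite Z" unfolding Z_def by (rule poly_roots_finite)
  have "norm (coeff (?P \<omega>) j0) \<le> M * norm (?F \<omega> 0)" if \<omega>: "R < norm \<omega>" "\<omega> \<notin> Z" for \<omega>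
  proof -
    have "?F \<omega> t \<noteq> 0" if t: "norm t < \<rho>" for t
    proof (cases "t = 0")
      case True then show ?thesis using \<omega>(2) by (simp add: Z_def poly_rescaled_leading_poly)
    next
      case False
      then obtain e where "0 < e" "e \<le> norm (?F \<omega> t)" using H[of t] t \<omega>(1) by auto
      then show ?thesis by auto
    qed
    then show ?thesis unfolding M_def by (rule tpoly_coeff_bound[OF \<rho>])
  qed
  moreover have "continuous_on UNIV (\<lambda>\<omega>. norm (coeff (?P \<omega>) j0))"
    unfolding coeff_rescaled_tpoly by (intro continuous_intros)
  moreover have "continuous_on UNIV (\<lambda>\<omega>. M * norm (?F \<omega> 0))"
    using cont[of 0] by (intro continuous_intros)
  ultimately have "norm (coeff (?P \<omega>0) j0) \<le> M * norm (?F \<omega>0 0)"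
    using le_on_closure_of_exterior[OF _ _ finZ _ \<omega>0] by blast
  then show False using F0 j0 by simp
qed

lemma finite_low_monos: "finite (low_monos q)"
proof (rule finite_subset)
  show "low_monos q \<subseteq> (\<Union>m<degree q. {..degree (coeff q m)} \<times> {m})"
    by (auto simp: low_monos_def intro: le_degree)
qed auto

lemma alpha_ge:
  assumes "(n, m) \<in> low_monos q"
  shows "(real n - real (degree (lead_coeff q))) / (real (degree q) - real m) \<le> alpha q"
  unfolding alpha_def using assms finite_low_monos by (intro Max_ge) force+

lemma alpha_times_fact_is_integer:
  assumes "low_monos q \<noteq> {}"
  shows "\<exists>A::int. real_of_int A = alpha q * real (fact (degree q))"
proof -
  define d where "d = degree q"
  define \<gamma> where "\<gamma> = degree (lead_coeff q)"
  have "alpha q \<in> (\<lambda>(n, m). (real n - real \<gamma>) / (real d - real m)) ` low_monos q"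
    unfolding alpha_def d_def \<gamma>_def using finite_low_monos assms by (intro Max_in) auto
  then obtain n m where nm: "(n, m) \<in> low_monos q"
    and \<alpha>: "alpha q = (real n - real \<gamma>) / (real d - real m)"
    by auto
  have m: "m < d" using nm by (simp add: low_monos_def d_def)
  then have "(d - m) dvd fact d" by (intro dvd_fact) auto
  then have "real (fact d div (d - m)) = real (fact d) / (real d - real m)"
    using m by (simp add: real_of_nat_div of_nat_diff)
  then have "real_of_int ((int n - int \<gamma>) * int (fact d div (d - m))) = alpha q * real (fact d)"
    by (simp add: \<alpha>)
  then show ?thesis unfolding d_def by blast
qed

(* The exponent of t = 1/zeta produced by a monomial of q under the rescaling is nonnegative;
   this is exactly the defining inequality of alpha. *)
lemma rescaling_exponent_nonneg:
  assumes A: "real_of_int A = alpha q * real B" and c: "coeff (coeff q m) n \<noteq> 0"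
  shows "0 \<le> int B * (int (degree (lead_coeff q)) - int n) + A * (int (degree q) - int m)"
proof (cases "m < degree q")
  case True
  let ?\<gamma> = "degree (lead_coeff q)" and ?d = "degree q"
  have "(n, m) \<in> low_monos q" using True c by (simp add: low_monos_def)
  then have "(real n - real ?\<gamma>) / (real ?d - real m) \<le> alpha q" by (rule alpha_ge)
  moreover have "0 < real ?d - real m" using True by simp
  ultimately have "real n - real ?\<gamma> \<le> alpha q * (real ?d - real m)"
    by (simp add: pos_divide_le_eq)
  then have "real B * (real n - real ?\<gamma>) \<le> real B * (alpha q * (real ?d - real m))"
    by (intro mult_left_mono) auto
  then have "0 \<le> real_of_int (int B * (int ?\<gamma> - int n) + A * (int ?d - int m))"
    using A by (simp add: algebra_simps)
  then show ?thesis by linarith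
next
  case False
  have "coeff q m \<noteq> 0" using c by auto
  then have "m = degree q" using False le_degree by fastforce
  moreover have "n \<le> degree (lead_coeff q)" using c le_degree \<open>m = degree q\<close> by blast
  ultimately show ?thesis by simp
qed

lemma power_int_combination:
  fixes x :: "'a::field"
  assumes "x \<noteq> 0"
  shows "x powi (int B * int n + A * int m) = (x ^ B) ^ n * (x powi A) ^ m"
proof -
  have "x powi (int B * int n + A * int m) = x powi (int B * int n) * x powi (A * int m)"
    using assms by (intro power_int_add) auto
  also have "x powi (int B * int n) = (x ^ B) ^ n"
    by (simp flip: of_nat_mult add: power_mult)
  also have "x powi (A * int m) = (x powi A) ^ m"
    by (simp add: power_int_mult)
  finally show ?thesis .
qed

lemma monomial_rescaling:
  fixes \<zeta> \<omega> :: complex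
  assumes z: "\<zeta> \<noteq> 0" and e: "0 \<le> e" "e = int B * (int g - int n) + A * (int d - int m)"
  shows "(\<zeta> ^ B) ^ n * (\<omega> * \<zeta> powi A) ^ m = (\<zeta> ^ B) ^ g * (\<zeta> powi A) ^ d * (\<omega> ^ m * (1 / \<zeta>) ^ nat e)"
proof -
  have "(1 / \<zeta>) ^ nat e = \<zeta> powi (- e)"
    using e(1) by (simp add: power_int_minus power_int_inverse power_inverse divide_inverse flip: power_int_of_nat)
  moreover have "(\<zeta> ^ B) ^ g * (\<zeta> powi A) ^ d * \<zeta> powi (- e) = (\<zeta> ^ B) ^ n * (\<zeta> powi A) ^ m"
  proof -
    have "(\<zeta> ^ B) ^ g * (\<zeta> powi A) ^ d * \<zeta> powi (- e)
          = \<zeta> powi (int B * int g + A * int d) * \<zeta> powi (- e)"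
      using z by (simp add: power_int_combination)
    also have "\<dots> = \<zeta> powi (int B * int g + A * int d + - e)"
      by (metis power_int_add z)
    also have "int B * int g + A * int d + - e = int B * int n + A * int m"
      using e(2) by (simp add: algebra_simps)
    finally show ?thesis using z by (simp add: power_int_combination)
  qed
  ultimately show ?thesis by (simp add: power_mult_distrib mult_ac)
qed

definition rescaling ::
    "complex poly poly \<Rightarrow> nat \<Rightarrow> int \<Rightarrow> nat \<Rightarrow> coeff_table \<Rightarrow> exponent_pattern \<Rightarrow> bool"
  where
  "rescaling q B A D cf k \<longleftrightarrow> 1 \<le> B \<and> real_of_int A = alpha q * real B \<and>
     monic_at_zero cf k (degree q) D (degree (lead_coeff q)) \<and>
     (\<forall>\<zeta> \<omega>. \<zeta> \<noteq> 0 \<longrightarrow> qeval q (\<zeta> ^ B) (\<omega> * \<zeta> powi A) =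
        (\<zeta> ^ B) ^ degree (lead_coeff q) * (\<zeta> powi A) ^ degree q * rescaled cf k (degree q) D \<omega> (1 / \<zeta>))"

lemma qeval_double_sum:
  assumes "\<And>m. m \<le> degree q \<Longrightarrow> degree (coeff q m) \<le> D"
  shows "qeval q z w = (\<Sum>m\<le>degree q. \<Sum>n\<le>D. coeff (coeff q m) n * z ^ n * w ^ m)"
proof -
  have "poly (coeff q m) z = (\<Sum>n\<le>D. coeff (coeff q m) n * z ^ n)" if "m \<le> degree q" for m
  proof -
    have "poly (coeff q m) z = (\<Sum>n\<le>degree (coeff q m). coeff (coeff q m) n * z ^ n)"
      by (simp add: poly_altdef)
    also have "\<dots> = (\<Sum>n\<le>D. coeff (coeff q m) n * z ^ n)"
      using assms[OF that] by (intro sum.mono_neutral_left) (auto simp: coeff_eq_0)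
    finally show ?thesis .
  qed
  then show ?thesis unfolding qeval_def by (auto simp: sum_distrib_right intro!: sum.cong)
qed

lemma rescaling_exists:
  assumes lq: "lead_coeff (lead_coeff q) = 1" and NE: "low_monos q \<noteq> {}"
  shows "\<exists>B A D cf k. rescaling q B A D cf k"
proof -
  define d where "d = degree q"
  define \<gamma> where "\<gamma> = degree (lead_coeff q)"
  define B :: nat where "B = fact d"
  obtain A where A: "real_of_int A = alpha q * real B"
    using alpha_times_fact_is_integer[OF NE] unfolding B_def d_def by blast
  define cf where "cf m n = coeff (coeff q m) n" for m n
  define D where "D = Max ((\<lambda>m. degree (coeff q m)) ` {..d})"
  define e where "e n m = int B * (int \<gamma> - int n) + A * (int d - int m)" for n m
  define k where "k n m = nat (e n m)" for n m
  have degle: "degree (coeff q m) \<le> D" if "m \<le> d" for m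
    unfolding D_def using that by (intro Max_ge) auto
  have lqd: "lead_coeff q = coeff q d" by (simp add: d_def)
  have mz: "monic_at_zero cf k d D \<gamma>"
  proof -
    have "cf d n = 0 \<or> 0 < k n d" if "n \<noteq> \<gamma>" for n
    proof (cases "cf d n = 0")
      case False
      then have "n \<le> \<gamma>" using le_degree by (auto simp: cf_def \<gamma>_def lqd)
      then have "n < \<gamma>" using that by simp
      then have "0 < e n d" by (simp add: e_def B_def)
      then show ?thesis by (simp add: k_def)
    qed simp
    moreover have "\<gamma> \<le> D" using degle[of d] by (simp add: \<gamma>_def lqd)
    ultimately show ?thesis using lq by (simp add: monic_at_zero_def cf_def k_def e_def \<gamma>_def lqd)
  qed
  have "qeval q (\<zeta> ^ B) (\<omega> * \<zeta> powi A) = (\<zeta> ^ B) ^ \<gamma> * (\<zeta> powi A) ^ d * rescaled cf k d D \<omega> (1 / \<zeta>)"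
    if z: "\<zeta> \<noteq> 0" for \<zeta> \<omega>
  proof -
    have "qeval q (\<zeta> ^ B) (\<omega> * \<zeta> powi A)
          = (\<Sum>m\<le>d. \<Sum>n\<le>D. cf m n * ((\<zeta> ^ B) ^ n * (\<omega> * \<zeta> powi A) ^ m))"
      using qeval_double_sum[of q D, OF degle[unfolded d_def]] by (simp add: cf_def d_def mult.assoc)
    also have "\<dots> = (\<Sum>m\<le>d. \<Sum>n\<le>D. (\<zeta> ^ B) ^ \<gamma> * (\<zeta> powi A) ^ d * (cf m n * \<omega> ^ m * (1 / \<zeta>) ^ k n m))"
    proof (intro sum.cong refl)
      fix m n
      show "cf m n * ((\<zeta> ^ B) ^ n * (\<omega> * \<zeta> powi A) ^ m)
            = (\<zeta> ^ B) ^ \<gamma> * (\<zeta> powi A) ^ d * (cf m n * \<omega> ^ m * (1 / \<zeta>) ^ k n m)"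
      proof (cases "cf m n = 0")
        case False
        then have "0 \<le> e n m"
          using rescaling_exponent_nonneg[OF A] by (simp add: cf_def e_def \<gamma>_def d_def)
        from monomial_rescaling[OF z this e_def[of n m], of \<omega>]
        show ?thesis by (simp add: k_def mult_ac)
      qed simp
    qed
    also have "\<dots> = (\<zeta> ^ B) ^ \<gamma> * (\<zeta> powi A) ^ d * rescaled cf k d D \<omega> (1 / \<zeta>)"
      unfolding rescaled_def by (simp add: sum_distrib_left)
    finally show ?thesis .
  qed
  moreover have "1 \<le> B" by (simp add: B_def)
  ultimately have "rescaling q B A D cf k" using A mz by (simp add: rescaling_def d_def \<gamma>_def)
  then show ?thesis by blast
qed

lemma W_set_nonempty_case:
  assumes "low_monos q \<noteq> {}"
  shows "W_set q R = {(z, w). R < norm z \<and> R * norm z powr alpha q < norm w}"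
  using assms by (simp add: W_set_def)

lemma rescaled_point_in_W:
  assumes NE: "low_monos q \<noteq> {}" and A: "real_of_int A = alpha q * real B" and z: "\<zeta> \<noteq> 0"
  shows "(\<zeta> ^ B, \<omega> * \<zeta> powi A) \<in> W_set q R \<longleftrightarrow> R < norm \<zeta> ^ B \<and> R < norm \<omega>"
proof -
  have zp: "0 < norm \<zeta>" using z by simp
  have "norm (\<zeta> ^ B) powr alpha q = (norm \<zeta> powr real B) powr alpha q"
    using zp by (simp add: norm_power powr_realpow)
  also have "\<dots> = norm \<zeta> powr (real_of_int A)" using A by (simp add: powr_powr mult_ac)
  also have "\<dots> = norm \<zeta> powi A" using zp by (intro powr_real_of_int') auto
  finally have e1: "norm (\<zeta> ^ B) powr alpha q = norm \<zeta> powi A" .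
  have e2: "norm (\<omega> * \<zeta> powi A) = norm \<omega> * norm \<zeta> powi A" by (simp add: norm_mult norm_power_int)
  have "0 < norm \<zeta> powi A" using zp by simp
  then show ?thesis unfolding W_set_nonempty_case[OF NE] using e1 e2 by (simp add: norm_power)
qed

lemma W_point_rescaled_coordinates:
  assumes NE: "low_monos q \<noteq> {}" and A: "real_of_int A = alpha q * real B" and B: "1 \<le> B"
    and zw: "(z, w) \<in> W_set q R" and z: "z \<noteq> 0"
  shows "\<exists>\<zeta> \<omega>. \<zeta> \<noteq> 0 \<and> z = \<zeta> ^ B \<and> w = \<omega> * \<zeta> powi A \<and> R < norm \<omega>"
proof -
  obtain \<zeta> where zeta: "z = \<zeta> ^ B" using exists_complex_root[of B z] B by auto
  then have \<zeta>: "\<zeta> \<noteq> 0" using z B by auto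
  define \<omega> where "\<omega> = w / \<zeta> powi A"
  have w: "w = \<omega> * \<zeta> powi A" using \<zeta> by (simp add: \<omega>_def)
  have "R < norm \<omega>" using rescaled_point_in_W[OF NE A \<zeta>, of \<omega>] zw by (simp add: zeta w)
  then show ?thesis using \<zeta> zeta w by blast
qed

(* Invariance f(W_R) in W_R keeps F(omega, t) away from 0 for |omega| > R and small t =/= 0:
   the second coordinate of f must exceed R |p(z)|^alpha. *)
lemma invariance_bounds_rescaled_below:
  assumes resc: "rescaling q B A D cf k" and NE: "low_monos q \<noteq> {}" and R: "1 < R"
    and inv: "skew p q ` W_set q R \<subseteq> W_set q R"
    and t: "0 < norm t" "norm t < 1 / R"
  shows "\<exists>e>0. \<forall>\<omega>. R < norm \<omega> \<longrightarrow> e \<le> norm (rescaled cf k (degree q) D \<omega> t)"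
proof -
  let ?F = "rescaled cf k (degree q) D" and ?\<gamma> = "degree (lead_coeff q)"
  have B: "1 \<le> B" and A: "real_of_int A = alpha q * real B"
    and ID: "\<And>\<zeta> \<omega>. \<zeta> \<noteq> 0 \<Longrightarrow> qeval q (\<zeta> ^ B) (\<omega> * \<zeta> powi A) =
               (\<zeta> ^ B) ^ ?\<gamma> * (\<zeta> powi A) ^ degree q * ?F \<omega> (1 / \<zeta>)"
    using resc by (auto simp: rescaling_def)
  define \<zeta> where "\<zeta> = 1 / t"
  have tz: "t = 1 / \<zeta>" and z: "\<zeta> \<noteq> 0" using t by (auto simp: \<zeta>_def)
  have "R < norm \<zeta>" using t R by (simp add: \<zeta>_def norm_divide field_simps)
  moreover have "norm \<zeta> ^ 1 \<le> norm \<zeta> ^ B" using calculation R B by (intro power_increasing) auto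
  ultimately have zB: "R < norm \<zeta> ^ B" by simp
  have W: "(\<zeta> ^ B, \<omega> * \<zeta> powi A) \<in> W_set q R" if "R < norm \<omega>" for \<omega>
    using rescaled_point_in_W[OF NE A z] zB that by simp
  then have img: "R * norm (poly p (\<zeta> ^ B)) powr alpha q < norm (qeval q (\<zeta> ^ B) (\<omega> * \<zeta> powi A))"
    if "R < norm \<omega>" for \<omega>
    using inv that by (fastforce simp: skew_def W_set_nonempty_case[OF NE])
  have "R < norm (poly p (\<zeta> ^ B))"
    using inv W[of "of_real (R + 1)"] R by (fastforce simp: skew_def W_set_nonempty_case[OF NE])
  then have "0 < norm (poly p (\<zeta> ^ B))" using R by linarith
  then have pz: "0 < norm (poly p (\<zeta> ^ B)) powr alpha q" by simp
  define P where "P = norm ((\<zeta> ^ B) ^ ?\<gamma> * (\<zeta> powi A) ^ degree q)"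
  have P: "0 < P" using z by (simp add: P_def)
  have "R * norm (poly p (\<zeta> ^ B)) powr alpha q / P \<le> norm (?F \<omega> t)" if "R < norm \<omega>" for \<omega>
    using img[OF that] P by (simp add: ID[OF z] tz norm_mult P_def pos_divide_le_eq mult_ac)
  moreover have "0 < R * norm (poly p (\<zeta> ^ B)) powr alpha q / P" using R pz P by simp
  ultimately show ?thesis by blast
qed

definition leading_term_comparable :: "complex poly poly \<Rightarrow> real \<Rightarrow> bool" where
  "leading_term_comparable q R \<longleftrightarrow> (\<exists>Z c C. 0 < c \<and> (\<forall>z w. (z, w) \<in> W_set q R \<longrightarrow> Z \<le> norm z \<longrightarrow>
      w \<noteq> 0 \<and> c * (norm z ^ degree (lead_coeff q) * norm w ^ degree q) \<le> norm (qeval q z w) \<and>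
      norm (qeval q z w) \<le> C * (norm z ^ degree (lead_coeff q) * norm w ^ degree q)))"

lemma comparable_with_low_monos:
  assumes lq: "lead_coeff (lead_coeff q) = 1" and NE: "low_monos q \<noteq> {}" and R: "1 < R"
    and inv: "skew p q ` W_set q R \<subseteq> W_set q R"
  shows "leading_term_comparable q R"
proof -
  obtain B A D cf k where resc: "rescaling q B A D cf k" using rescaling_exists[OF lq NE] by blast
  define d where "d = degree q"
  define \<gamma> where "\<gamma> = degree (lead_coeff q)"
  let ?F = "rescaled cf k d D"
  have B: "1 \<le> B" and A: "real_of_int A = alpha q * real B" and mz: "monic_at_zero cf k d D \<gamma>"
    and ID: "\<And>\<zeta> \<omega>. \<zeta> \<noteq> 0 \<Longrightarrow> qeval q (\<zeta> ^ B) (\<omega> * \<zeta> powi A) =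
               (\<zeta> ^ B) ^ \<gamma> * (\<zeta> powi A) ^ d * ?F \<omega> (1 / \<zeta>)"
    using resc by (auto simp: rescaling_def d_def \<gamma>_def)
  have H: "\<And>t. 0 < norm t \<Longrightarrow> norm t < 1 / R \<Longrightarrow> \<exists>e>0. \<forall>\<omega>. R < norm \<omega> \<longrightarrow> e \<le> norm (?F \<omega> t)"
    using invariance_bounds_rescaled_below[OF resc NE R inv] by (simp add: d_def)
  have "?F \<omega> 0 \<noteq> 0" if "R \<le> norm \<omega>" for \<omega>
    using rescaled_nonvanishing_at_zero[of "1 / R", OF _ mz H that] R by simp
  then obtain c T where c: "0 < c" and T: "0 < T" "T \<le> 1"
    and LB: "\<And>\<omega> t. R \<le> norm \<omega> \<Longrightarrow> norm t \<le> T \<Longrightarrow> c * norm \<omega> ^ d \<le> norm (?F \<omega> t)"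
    using rescaled_lower_bound[OF mz, of R] R by auto
  define S where "S = coeff_mass cf d D"
  define Z where "Z = max (R + 1) ((1 / T) ^ B)"
  have "w \<noteq> 0 \<and> c * (norm z ^ \<gamma> * norm w ^ d) \<le> norm (qeval q z w) \<and>
          norm (qeval q z w) \<le> S * (norm z ^ \<gamma> * norm w ^ d)"
    if zw: "(z, w) \<in> W_set q R" and zZ: "Z \<le> norm z" for z w
  proof -
    have "z \<noteq> 0" using zZ R by (auto simp: Z_def)
    then obtain \<zeta> \<omega> where z: "\<zeta> \<noteq> 0" and zeta: "z = \<zeta> ^ B" and w: "w = \<omega> * \<zeta> powi A"
      and \<omega>R: "R < norm \<omega>"
      using W_point_rescaled_coordinates[OF NE A B zw] by blast
    have "(1 / T) ^ Suc (B - 1) \<le> norm \<zeta> ^ Suc (B - 1)"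
      using zZ B by (simp add: Z_def zeta norm_power)
    then have "1 / T \<le> norm \<zeta>" by (rule power_le_imp_le_base) simp
    then have t: "norm (1 / \<zeta>) \<le> T" using T(1) z by (simp add: norm_divide field_simps)
    have lo: "c * norm \<omega> ^ d \<le> norm (?F \<omega> (1 / \<zeta>))" using LB[OF _ t] \<omega>R by simp
    have hi: "norm (?F \<omega> (1 / \<zeta>)) \<le> S * norm \<omega> ^ d"
      unfolding S_def using t T \<omega>R R by (intro rescaled_upper_bound) auto
    define P where "P = norm ((\<zeta> ^ B) ^ \<gamma> * (\<zeta> powi A) ^ d)"
    have P: "0 < P" using z by (simp add: P_def)
    have nq: "norm (qeval q z w) = P * norm (?F \<omega> (1 / \<zeta>))"
      by (simp add: zeta w ID[OF z] P_def norm_mult)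
    have nzw: "norm z ^ \<gamma> * norm w ^ d = P * norm \<omega> ^ d"
      by (simp add: zeta w P_def norm_mult norm_power norm_power_int power_mult_distrib)
    have "w \<noteq> 0" using \<omega>R R w z by auto
    then show ?thesis unfolding nq nzw using lo hi P by (auto simp: mult.left_commute)
  qed
  then show ?thesis unfolding leading_term_comparable_def d_def \<gamma>_def using c by blast
qed

(* Without lower monomials q = b(z) w^d, and only the monic polynomial b needs estimating. *)
lemma comparable_without_low_monos:
  assumes lq: "lead_coeff (lead_coeff q) = 1" and E: "low_monos q = {}"
  shows "leading_term_comparable q R"
proof -
  define d where "d = degree q"
  define b where "b = lead_coeff q"
  have "coeff q m = 0" if "m < d" for m
    using E that by (intro poly_eqI) (auto simp: low_monos_def d_def)
  then have qe: "qeval q z w = poly b z * w ^ d" for z w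
    unfolding qeval_def d_def[symmetric] b_def
    by (simp add: d_def flip: lessThan_Suc_atMost)
  obtain R0 where cmp: "\<And>x. R0 \<le> norm x \<Longrightarrow>
      norm x ^ degree b / 2 \<le> norm (poly b x) \<and> norm (poly b x) \<le> 2 * norm x ^ degree b"
    using monic_poly_comparable[of b] lq by (auto simp: b_def)
  have "w \<noteq> 0 \<and> 1 / 2 * (norm z ^ degree b * norm w ^ d) \<le> norm (qeval q z w) \<and>
          norm (qeval q z w) \<le> 2 * (norm z ^ degree b * norm w ^ d)"
    if "(z, w) \<in> W_set q R" "R0 \<le> norm z" for z w
    using that cmp[of z] E by (auto simp: W_set_def qe norm_mult norm_power intro: mult_right_mono)
  then show ?thesis unfolding leading_term_comparable_def b_def d_def
    by (intro exI[of _ R0] exI[of _ "1 / 2"] exI[of _ 2]) auto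
qed

lemma leading_term_comparable:
  assumes "lead_coeff (lead_coeff q) = 1" and "1 < R" and "skew p q ` W_set q R \<subseteq> W_set q R"
  shows "leading_term_comparable q R"
proof (cases "low_monos q = {}")
  case True
  with assms(1) show ?thesis by (rule comparable_without_low_monos)
next
  case False
  then show ?thesis using assms by (intro comparable_with_low_monos)
qed

lemma fibre_log_estimate:
  assumes "leading_term_comparable q R"
  shows "\<exists>Z K. \<forall>z w. (z, w) \<in> W_set q R \<longrightarrow> Z \<le> norm z \<longrightarrow> w \<noteq> 0 \<and>
           \<bar>ln (norm (qeval q z w)) - real (degree q) * ln (norm w)
              - real (degree (lead_coeff q)) * ln (norm z)\<bar> \<le> K"
proof -
  obtain Z c C where c: "0 < c" and cmp: "\<And>z w. (z, w) \<in> W_set q R \<Longrightarrow> Z \<le> norm z \<Longrightarrow>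
      w \<noteq> 0 \<and> c * (norm z ^ degree (lead_coeff q) * norm w ^ degree q) \<le> norm (qeval q z w) \<and>
      norm (qeval q z w) \<le> C * (norm z ^ degree (lead_coeff q) * norm w ^ degree q)"
    using assms unfolding leading_term_comparable_def by blast
  have "w \<noteq> 0 \<and> \<bar>ln (norm (qeval q z w)) - real (degree q) * ln (norm w)
              - real (degree (lead_coeff q)) * ln (norm z)\<bar> \<le> max \<bar>ln c\<bar> \<bar>ln C\<bar>"
    if zw: "(z, w) \<in> W_set q R" "max Z 1 \<le> norm z" for z w
  proof -
    note b = cmp[OF zw(1)] zw(2)
    have z: "0 < norm z" using zw(2) by linarith
    have w: "0 < norm w" using b by auto
    let ?X = "norm z ^ degree (lead_coeff q) * norm w ^ degree q"
    have "\<bar>ln (norm (qeval q z w)) - ln ?X\<bar> \<le> max \<bar>ln c\<bar> \<bar>ln C\<bar>"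
      by (rule ln_sandwich(2)[OF c]) (use b z w in simp_all)
    moreover have "ln ?X = real (degree (lead_coeff q)) * ln (norm z) + real (degree q) * ln (norm w)"
      using z w by (simp add: ln_mult ln_realpow)
    ultimately show ?thesis using b by (smt (verit))
  qed
  then show ?thesis by blast
qed

lemma skew_iter: "(skew p q ^^ n) (z, w) = ((poly p ^^ n) z, Qit p q n z w)"
proof (induction n arbitrary: z w)
  case 0 then show ?case by simp
next
  case (Suc n)
  have "(skew p q ^^ Suc n) (z, w) = (skew p q ^^ n) (skew p q (z, w))"
    by (simp only: funpow_Suc_right o_apply)
  also have "\<dots> = (skew p q ^^ n) (poly p z, qeval q z w)" by (simp add: skew_def)
  also have "\<dots> = ((poly p ^^ n) (poly p z), Qit p q n (poly p z) (qeval q z w))" by (rule Suc.IH)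
  also have "(poly p ^^ n) (poly p z) = (poly p ^^ Suc n) z" by (simp only: funpow_Suc_right o_apply)
  finally show ?case by simp
qed

lemma Qit_Suc_right: "Qit p q (Suc n) z w = qeval q ((poly p ^^ n) z) (Qit p q n z w)"
proof -
  have "Qit p q (Suc n) z w = snd ((skew p q ^^ Suc n) (z, w))" by (simp only: skew_iter snd_conv)
  also have "\<dots> = snd (skew p q ((skew p q ^^ n) (z, w)))" by (simp only: funpow.simps o_apply)
  also have "\<dots> = qeval q ((poly p ^^ n) z) (Qit p q n z w)" by (simp only: skew_iter skew_def fst_conv snd_conv)
  finally show ?thesis .
qed

lemma orbit_eventually_in_W:
  assumes inv: "skew p q ` W_set q R \<subseteq> W_set q R" and zw: "(z, w) \<in> A_f p q R"
  shows "\<exists>N. \<forall>n\<ge>N. ((poly p ^^ n) z, Qit p q n z w) \<in> W_set q R"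
proof -
  obtain N where N: "(skew p q ^^ N) (z, w) \<in> W_set q R" using zw unfolding A_f_def by auto
  have "(skew p q ^^ (N + k)) (z, w) \<in> W_set q R" for k
    by (induction k) (use N inv in auto)
  then have "(skew p q ^^ n) (z, w) \<in> W_set q R" if "N \<le> n" for n
    using that le_add_diff_inverse by metis
  then show ?thesis by (auto simp: skew_iter)
qed

lemma escape_eventually_large:
  assumes "z \<in> escape_set p"
  shows "\<exists>N. \<forall>n\<ge>N. Z \<le> norm ((poly p ^^ n) z)"
  using assms unfolding escape_set_def filterlim_at_top eventually_sequentially by blast

lemma escape_set_backward:
  assumes "(poly p ^^ N) z \<in> escape_set p"
  shows "z \<in> escape_set p"
proof -
  have shifted: "eventually (\<lambda>k. Z \<le> norm ((poly p ^^ (k + N)) z)) sequentially" for Z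
    using assms by (simp add: escape_set_def filterlim_at_top funpow_add)
  have "eventually (\<lambda>n. Z \<le> norm ((poly p ^^ n) z)) sequentially" for Z
    using iffD1[OF eventually_sequentially_seg[where P = "\<lambda>n. Z \<le> norm ((poly p ^^ n) z)" and k = N]]
      shifted[of Z] by blast
  then show ?thesis by (simp add: escape_set_def filterlim_at_top)
qed

(* ln |p^n(z)| = d^n G_p(z) + O(1) for escaping z; in particular the Green function exists
   as a limit there. *)
lemma green_asymptotics:
  assumes dp: "degree p = d" and d: "2 \<le> d" and lp: "lead_coeff p = 1" and esc: "z \<in> escape_set p"
  shows "\<exists>N. \<forall>n\<ge>N. \<bar>ln (norm ((poly p ^^ n) z)) - real d ^ n * green p z\<bar> \<le> ln 2 / (real d - 1)"
proof -
  obtain R0 where R0: "1 \<le> R0"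
    and est: "\<And>x. R0 \<le> norm x \<Longrightarrow> \<bar>ln (norm (poly p x)) - real d * ln (norm x)\<bar> \<le> ln 2"
    using monic_poly_log_estimate[OF lp] dp by auto
  obtain N where big: "\<And>n. N \<le> n \<Longrightarrow> R0 \<le> norm ((poly p ^^ n) z)"
    using escape_eventually_large[OF esc] by blast
  define L where "L n = ln (norm ((poly p ^^ n) z))" for n
  have "\<bar>L (Suc n) - real d * L n - 0 * real d ^ n\<bar> \<le> ln 2" if "N \<le> n" for n
    using est[OF big[OF that]] by (simp add: L_def)
  then obtain G where G: "(\<lambda>n. L n / real d ^ n - real n * 0 / real d) \<longlonglongrightarrow> G"
    and tail: "\<forall>n\<ge>N. \<bar>L n - real d ^ n * (G + real n * 0 / real d)\<bar> \<le> ln 2 / (real d - 1)"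
    using growth_recursion[of "real d" "ln 2" N L 0] d by auto
  have "(\<lambda>n. max 0 (L n) / real (degree p) ^ n) \<longlonglongrightarrow> G"
  proof (rule Lim_transform_eventually)
    show "(\<lambda>n. L n / real d ^ n) \<longlonglongrightarrow> G" using G by simp
    have L0: "0 \<le> L n" if "N \<le> n" for n using big[OF that] R0 by (simp add: L_def)
    then show "\<forall>\<^sub>F n in sequentially. L n / real d ^ n = max 0 (L n) / real (degree p) ^ n"
      unfolding eventually_sequentially dp by (intro exI[of _ N] allI impI) (simp add: max.absorb2)
  qed
  then have "green p z = G" unfolding green_def L_def by (rule limI)
  then show ?thesis using tail by (auto simp: L_def)
qed

lemma fibre_log_recursion:
  assumes dp: "degree p = d" and d: "2 \<le> d" and lp: "lead_coeff p = 1" and dq: "degree q = d"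
    and lq: "lead_coeff (lead_coeff q) = 1" and R: "1 < R"
    and inv: "skew p q ` W_set q R \<subseteq> W_set q R" and esc: "W_set q R \<subseteq> escape_set p \<times> UNIV"
    and zw: "(z, w) \<in> A_f p q R"
  shows "\<exists>N K. \<forall>n\<ge>N. \<bar>ln (norm (Qit p q (Suc n) z w)) - real d * ln (norm (Qit p q n z w))
                         - real (degree (lead_coeff q)) * green p z * real d ^ n\<bar> \<le> K"
proof -
  define \<gamma> where "\<gamma> = degree (lead_coeff q)"
  define G where "G = green p z"
  define zn where "zn n = (poly p ^^ n) z" for n
  define x where "x n = ln (norm (Qit p q n z w))" for n
  obtain N1 where inW: "\<And>n. N1 \<le> n \<Longrightarrow> (zn n, Qit p q n z w) \<in> W_set q R"
    using orbit_eventually_in_W[OF inv zw] by (auto simp: zn_def)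
  have "z \<in> escape_set p"
    using inW[of N1] esc by (auto simp: zn_def intro: escape_set_backward)
  note escaping = escape_eventually_large[OF this] green_asymptotics[OF dp d lp this]
  obtain Z K where fib: "\<And>z w. (z, w) \<in> W_set q R \<Longrightarrow> Z \<le> norm z \<Longrightarrow>
      \<bar>ln (norm (qeval q z w)) - real d * ln (norm w) - real \<gamma> * ln (norm z)\<bar> \<le> K"
    using fibre_log_estimate[OF leading_term_comparable[OF lq R inv]] dq unfolding \<gamma>_def by metis
  obtain N2 where big: "\<And>n. N2 \<le> n \<Longrightarrow> Z \<le> norm (zn n)"
    using escaping(1) unfolding zn_def by blast
  obtain N3 where green: "\<And>n. N3 \<le> n \<Longrightarrow> \<bar>ln (norm (zn n)) - real d ^ n * G\<bar> \<le> ln 2 / (real d - 1)"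
    using escaping(2) unfolding zn_def G_def by blast
  define N where "N = max N1 (max N2 N3)"
  have "\<bar>x (Suc n) - real d * x n - real \<gamma> * G * real d ^ n\<bar> \<le> K + real \<gamma> * (ln 2 / (real d - 1))"
    if "N \<le> n" for n
  proof -
    have "Qit p q (Suc n) z w = qeval q (zn n) (Qit p q n z w)"
      by (simp only: Qit_Suc_right zn_def)
    then have "\<bar>x (Suc n) - real d * x n - real \<gamma> * ln (norm (zn n))\<bar> \<le> K"
      using fib[OF inW big] that by (simp add: N_def x_def)
    moreover have "real \<gamma> * ln (norm (zn n)) - real \<gamma> * G * real d ^ n
                     = real \<gamma> * (ln (norm (zn n)) - real d ^ n * G)"
      by (simp add: algebra_simps)
    then have "\<bar>real \<gamma> * ln (norm (zn n)) - real \<gamma> * G * real d ^ n\<bar> \<le> real \<gamma> * (ln 2 / (real d - 1))"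
      using mult_left_mono[OF green[of n], of "real \<gamma>"] that by (simp add: abs_mult N_def)
    ultimately show ?thesis by (smt (verit))
  qed
  then show ?thesis unfolding x_def \<gamma>_def G_def by blast
qed

theorem theorem6p10:
  fixes p :: "complex poly" and q :: "complex poly poly" and d :: nat and R :: real
  assumes "degree p = d" and "d \<ge> 2" and "lead_coeff p = 1"
    and "degree q = d"
    and "lead_coeff (lead_coeff q) = 1"
    and "degree (lead_coeff q) \<ge> 1"
    and "R > 1"
    and "skew p q ` W_set q R \<subseteq> W_set q R"
    and "W_set q R \<subseteq> escape_set p \<times> UNIV"
    and "(z, w) \<in> A_f p q R"
  shows "(\<lambda>n. ln (norm (Qit p q n z w)) / (real n * real (degree (lead_coeff q)) * real d ^ (n - 1)))
           \<longlonglongrightarrow> green p z"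
proof -
  define \<gamma> where "\<gamma> = degree (lead_coeff q)"
  define x where "x n = ln (norm (Qit p q n z w))" for n
  obtain N K where rec: "\<And>n. N \<le> n \<Longrightarrow> \<bar>x (Suc n) - real d * x n - real \<gamma> * green p z * real d ^ n\<bar> \<le> K"
    using fibre_log_recursion[OF assms(1-5,7-10)] unfolding x_def \<gamma>_def by blast
  then have "0 \<le> K" using order_trans[OF abs_ge_zero rec[of N]] by simp
  with rec obtain E where "(\<lambda>n. x n / real d ^ n - real n * (real \<gamma> * green p z) / real d) \<longlonglongrightarrow> E"
    using growth_recursion[of "real d" K N x "real \<gamma> * green p z"] assms(2) by (auto simp: mult_ac)
  then have "(\<lambda>n. x n / (real n * real \<gamma> * real d ^ (n - 1))) \<longlonglongrightarrow> green p z"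
    using assms(2,6) by (intro normalised_growth_limit) (auto simp: \<gamma>_def)
  then show ?thesis by (simp add: x_def \<gamma>_def)
qed

end
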